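(* Let $\mathbb{K}$ be a non-Archimedean valued field, $n\ge1$, and $G$ a discrete group such that $H_{n-1}(G, \mathbb{Z})$ is a finitely generated abelian group. Then the comparison map $c^n : H^n_b(G, \mathbb{K}) \to H^n(G, \mathbb{K})$ is injective.
   Context: A non-Archimedean valued field is a field with an absolute value satisfying the ultrametric inequality. $H_{n-1}(G,\mathbb{Z})$ is ordinary group homology with trivial coefficients. $\mathbb{K}$ is a trivial $G$-module; $H^\bullet(G,\mathbb{K})$ is computed by the bar complex of all maps $G^n\to\mathbb{K}$ with $\delta^nf(g_1,\dots,g_{n+1})=f(g_2,\dots,g_{n+1})+\sum_{i=1}^n(-1)^if(g_1,\dots,g_ig_{i+1},\dots,g_{n+1})+(-1)^{n+1}f(g_1,\dots,g_n)$, and $H^\bullet_b(G,\mathbb{K})$ by its subcomplex of bounded maps; $c^n$ is induced by inclusion. *)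

theory Defs
  imports Complex_Main "HOL-Algebra.Group"
begin

definition nonarch_abs :: "('k::field \<Rightarrow> real) \<Rightarrow> bool" where
  "nonarch_abs v \<longleftrightarrow>
     (\<forall>x. v x \<ge> 0) \<and> (\<forall>x. v x = 0 \<longleftrightarrow> x = 0) \<and>
     (\<forall>x y. v (x * y) = v x * v y) \<and>
     (\<forall>x y. v (x + y) \<le> max (v x) (v y))"

definition tuples :: "('a, 'b) monoid_scheme \<Rightarrow> nat \<Rightarrow> 'a list set" where
  "tuples G n = {gs. length gs = n \<and> set gs \<subseteq> carrier G}"

text \<open>For 1 <= i < length gs: (g_1,...,g_i g_{i+1},...,g_m).\<close>
definition face_mul :: "('a, 'b) monoid_scheme \<Rightarrow> nat \<Rightarrow> 'a list \<Rightarrow> 'a list" where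
  "face_mul G i gs = take (i - 1) gs @ [gs ! (i - 1) \<otimes>\<^bsub>G\<^esub> gs ! i] @ drop (i + 1) gs"

definition cochains :: "('a, 'b) monoid_scheme \<Rightarrow> nat \<Rightarrow> ('a list \<Rightarrow> 'k::field) set" where
  "cochains G n = {f. \<forall>x. x \<notin> tuples G n \<longrightarrow> f x = 0}"

definition bcochains :: "('a, 'b) monoid_scheme \<Rightarrow> ('k::field \<Rightarrow> real) \<Rightarrow> nat
    \<Rightarrow> ('a list \<Rightarrow> 'k) set" where
  "bcochains G v n = {f \<in> cochains G n. \<exists>C. \<forall>x. v (f x) \<le> C}"

definition cobound :: "('a, 'b) monoid_scheme \<Rightarrow> nat \<Rightarrow> ('a list \<Rightarrow> 'k::field) \<Rightarrow> 'a list \<Rightarrow> 'k" where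
  "cobound G n f = (\<lambda>gs. if gs \<in> tuples G (n + 1) then
      f (tl gs) + (\<Sum>i\<in>{1..n}. (-1) ^ i * f (face_mul G i gs)) + (-1) ^ (n + 1) * f (butlast gs)
    else 0)"

definition cocycles :: "('a, 'b) monoid_scheme \<Rightarrow> nat \<Rightarrow> ('a list \<Rightarrow> 'k::field) set" where
  "cocycles G n = {f \<in> cochains G n. cobound G n f = (\<lambda>_. 0)}"

definition coboundaries :: "('a, 'b) monoid_scheme \<Rightarrow> nat \<Rightarrow> ('a list \<Rightarrow> 'k::field) set" where
  "coboundaries G n = (if n = 0 then {\<lambda>_. 0} else cobound G (n - 1) ` cochains G (n - 1))"

definition bcocycles :: "('a, 'b) monoid_scheme \<Rightarrow> ('k::field \<Rightarrow> real) \<Rightarrow> nat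
    \<Rightarrow> ('a list \<Rightarrow> 'k) set" where
  "bcocycles G v n = {f \<in> bcochains G v n. cobound G n f = (\<lambda>_. 0)}"

definition bcoboundaries :: "('a, 'b) monoid_scheme \<Rightarrow> ('k::field \<Rightarrow> real) \<Rightarrow> nat
    \<Rightarrow> ('a list \<Rightarrow> 'k) set" where
  "bcoboundaries G v n = (if n = 0 then {\<lambda>_. 0} else cobound G (n - 1) ` bcochains G v (n - 1))"

definition coh_class :: "('a, 'b) monoid_scheme \<Rightarrow> nat \<Rightarrow> ('a list \<Rightarrow> 'k::field) \<Rightarrow> ('a list \<Rightarrow> 'k) set" where
  "coh_class G n f = {f' \<in> cocycles G n. (\<lambda>x. f' x - f x) \<in> coboundaries G n}"

definition bcoh_class :: "('a, 'b) monoid_scheme \<Rightarrow> ('k::field \<Rightarrow> real) \<Rightarrow> nat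
    \<Rightarrow> ('a list \<Rightarrow> 'k) \<Rightarrow> ('a list \<Rightarrow> 'k) set" where
  "bcoh_class G v n f = {f' \<in> bcocycles G v n. (\<lambda>x. f' x - f x) \<in> bcoboundaries G v n}"

definition cohomology :: "('a, 'b) monoid_scheme \<Rightarrow> nat \<Rightarrow> ('a list \<Rightarrow> 'k::field) set set" where
  "cohomology G n = coh_class G n ` cocycles G n"

definition bounded_cohomology :: "('a, 'b) monoid_scheme \<Rightarrow> ('k::field \<Rightarrow> real) \<Rightarrow> nat
    \<Rightarrow> ('a list \<Rightarrow> 'k) set set" where
  "bounded_cohomology G v n = bcoh_class G v n ` bcocycles G v n"

text \<open>Comparison map c^n, induced by inclusion: sends [f]_b to [f].\<close>
definition comparison_map :: "('a, 'b) monoid_scheme \<Rightarrow> nat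
    \<Rightarrow> ('a list \<Rightarrow> 'k::field) set \<Rightarrow> ('a list \<Rightarrow> 'k) set" where
  "comparison_map G n X = (\<Union>f\<in>X. coh_class G n f)"

definition chains :: "('a, 'b) monoid_scheme \<Rightarrow> nat \<Rightarrow> ('a list \<Rightarrow> int) set" where
  "chains G k = {c. finite {x. c x \<noteq> 0} \<and> (\<forall>x. c x \<noteq> 0 \<longrightarrow> x \<in> tuples G k)}"

definition ind :: "'a list \<Rightarrow> 'a list \<Rightarrow> int" where
  "ind x = (\<lambda>y. if y = x then 1 else 0)"

definition bd_basis :: "('a, 'b) monoid_scheme \<Rightarrow> nat \<Rightarrow> 'a list \<Rightarrow> 'a list \<Rightarrow> int" where
  "bd_basis G k gs = (if k = 0 then (\<lambda>_. 0) else
     (\<lambda>y. ind (tl gs) y + (\<Sum>i\<in>{1..k-1}. (-1) ^ i * ind (face_mul G i gs) y)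
          + (-1) ^ k * ind (butlast gs) y))"

definition bd :: "('a, 'b) monoid_scheme \<Rightarrow> nat \<Rightarrow> ('a list \<Rightarrow> int) \<Rightarrow> 'a list \<Rightarrow> int" where
  "bd G k c = (\<lambda>y. \<Sum>x\<in>{x. c x \<noteq> 0}. c x * bd_basis G k x y)"

definition hcycles :: "('a, 'b) monoid_scheme \<Rightarrow> nat \<Rightarrow> ('a list \<Rightarrow> int) set" where
  "hcycles G k = {c \<in> chains G k. bd G k c = (\<lambda>_. 0)}"

definition hboundaries :: "('a, 'b) monoid_scheme \<Rightarrow> nat \<Rightarrow> ('a list \<Rightarrow> int) set" where
  "hboundaries G k = bd G (k + 1) ` chains G (k + 1)"

text \<open>H_k(G,Z) = Z_k / B_k is a finitely generated abelian group:
  finitely many cycles whose classes generate the quotient.\<close>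
definition homology_fg :: "('a, 'b) monoid_scheme \<Rightarrow> nat \<Rightarrow> bool" where
  "homology_fg G k \<longleftrightarrow> (\<exists>S. finite S \<and> S \<subseteq> hcycles G k \<and>
     (\<forall>z\<in>hcycles G k. \<exists>a :: ('a list \<Rightarrow> int) \<Rightarrow> int.
        (\<lambda>y. z y - (\<Sum>s\<in>S. a s * s y)) \<in> hboundaries G k))"

end

theory Submission
  imports Defs
begin

(* Let f1, f2 be bounded n-cocycles whose difference is the coboundary of an arbitrary
   (n-1)-cochain g. The image of the boundary map of the integral bar complex in degree n-1
   is a subgroup of a free abelian group, hence free, so the boundary map has an additive
   section s (built with Zorn's lemma). The cochain h(sigma) = <g, sigma - s(d sigma)> then
   has the same coboundary as g, since s(d d tau) = 0, and it is bounded: sigma - s(d sigma)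
   is a cycle, every cycle is an integral combination of finitely many fixed cycles plus a
   boundary d c, and <g, d c> = <delta g, c>. As integers have absolute value at most 1 in a
   non-Archimedean field, the ultrametric inequality bounds all these pairings uniformly. *)

section \<open>Non-Archimedean absolute values\<close>

lemma nonarch_absD:
  assumes "nonarch_abs v"
  shows nonarch_abs_nonneg: "v x \<ge> 0"
    and nonarch_abs_zero: "v 0 = 0"
    and nonarch_abs_mult: "v (x * y) = v x * v y"
    and nonarch_abs_add: "v (x + y) \<le> max (v x) (v y)"
  using assms unfolding nonarch_abs_def by auto

lemma nonarch_abs_one: "nonarch_abs v \<Longrightarrow> v 1 = 1"
  using nonarch_abs_mult[of v 1 1] unfolding nonarch_abs_def by force

lemma nonarch_abs_uminus:
  assumes "nonarch_abs v"
  shows "v (- x) = v x"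
proof -
  have "v (-1) * v (-1) = 1"
    using nonarch_abs_mult[OF assms, of "-1" "-1"] nonarch_abs_one[OF assms] by simp
  moreover have "v (-1) \<ge> 0" by (rule nonarch_abs_nonneg[OF assms])
  ultimately have "v (-1) = 1"
    by (metis abs_of_nonneg abs_square_eq_1 power2_eq_square)
  then show ?thesis
    using nonarch_abs_mult[OF assms, of "-1" x] by simp
qed

lemma nonarch_abs_diff: "nonarch_abs v \<Longrightarrow> v (x - y) \<le> max (v x) (v y)"
  using nonarch_abs_add[of v x "- y"] nonarch_abs_uminus[of v y] by simp

lemma nonarch_abs_of_nat_le_1:
  assumes "nonarch_abs v"
  shows "v (of_nat n) \<le> 1"
proof (induction n)
  case 0
  then show ?case using nonarch_abs_zero[OF assms] by simp
next
  case (Suc n)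
  have "v (of_nat (Suc n)) \<le> max (v 1) (v (of_nat n))"
    using nonarch_abs_add[OF assms, of 1 "of_nat n"] by simp
  then show ?case using Suc nonarch_abs_one[OF assms] by simp
qed

lemma nonarch_abs_of_int_le_1:
  assumes "nonarch_abs v"
  shows "v (of_int m) \<le> 1"
proof (cases "m \<ge> 0")
  case True
  then show ?thesis using nonarch_abs_of_nat_le_1[OF assms, of "nat m"] by simp
next
  case False
  then have "of_int m = - (of_nat (nat (- m)) :: 'a)" by simp
  then show ?thesis
    using nonarch_abs_of_nat_le_1[OF assms] nonarch_abs_uminus[OF assms] by metis
qed

lemma nonarch_abs_of_int_mult_le:
  assumes "nonarch_abs v"
  shows "v (of_int m * x) \<le> v x"
  using mult_right_mono[OF nonarch_abs_of_int_le_1[OF assms] nonarch_abs_nonneg[OF assms]]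
  by (simp add: nonarch_abs_mult[OF assms])

lemma nonarch_abs_sum_le:
  assumes "nonarch_abs v" and "\<And>i. i \<in> I \<Longrightarrow> v (f i) \<le> B" and "B \<ge> 0"
  shows "v (\<Sum>i\<in>I. f i) \<le> B"
  using assms(2)
proof (induction I rule: infinite_finite_induct)
  case (insert i I)
  have "v (\<Sum>i\<in>insert i I. f i) \<le> max (v (f i)) (v (\<Sum>i\<in>I. f i))"
    using insert.hyps nonarch_abs_add[OF assms(1)] by simp
  then show ?case using insert by (simp add: order_trans)
qed (use nonarch_abs_zero[OF assms(1)] assms(3) in simp_all)

section \<open>Integer linear combinations\<close>

text \<open>\<open>lincomb c g\<close> is the Kronecker pairing \<open>\<langle>g, c\<rangle>\<close> of a cochain with a chain.\<close>

definition lincomb :: "('x \<Rightarrow> int) \<Rightarrow> ('x \<Rightarrow> 'r::comm_ring_1) \<Rightarrow> 'r" where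
  "lincomb c F = (\<Sum>x\<in>{x. c x \<noteq> 0}. of_int (c x) * F x)"

lemma lincomb_superset:
  assumes "finite T" and "{x. c x \<noteq> 0} \<subseteq> T"
  shows "lincomb c F = (\<Sum>x\<in>T. of_int (c x) * F x)"
  unfolding lincomb_def by (rule sum.mono_neutral_left) (use assms in auto)

lemma lincomb_zero [simp]: "lincomb (\<lambda>_. 0) F = 0"
  by (simp add: lincomb_def)

lemma lincomb_ind [simp]: "lincomb (ind x) F = F x"
  by (subst lincomb_superset[of "{x}"]) (auto simp: ind_def)

lemma lincomb_sum:
  assumes "finite I" and "\<And>i. i \<in> I \<Longrightarrow> finite {x. c i x \<noteq> 0}"
  shows "lincomb (\<lambda>y. \<Sum>i\<in>I. a i * c i y) F = (\<Sum>i\<in>I. of_int (a i) * lincomb (c i) F)"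
proof -
  define T where "T = (\<Union>i\<in>I. {x. c i x \<noteq> 0})"
  have T: "finite T" "\<And>i. i \<in> I \<Longrightarrow> {x. c i x \<noteq> 0} \<subseteq> T"
    unfolding T_def using assms by auto
  have "{x. (\<Sum>i\<in>I. a i * c i x) \<noteq> 0} \<subseteq> T"
    unfolding T_def by (auto elim!: sum.not_neutral_contains_not_neutral)
  then have "lincomb (\<lambda>y. \<Sum>i\<in>I. a i * c i y) F = (\<Sum>x\<in>T. of_int (\<Sum>i\<in>I. a i * c i x) * F x)"
    by (rule lincomb_superset[OF T(1)])
  also have "\<dots> = (\<Sum>i\<in>I. of_int (a i) * (\<Sum>x\<in>T. of_int (c i x) * F x))"
    by (simp add: sum_distrib_left sum_distrib_right mult.assoc sum.swap[of _ T])
  also have "\<dots> = (\<Sum>i\<in>I. of_int (a i) * lincomb (c i) F)"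
    by (intro sum.cong refl) (simp add: lincomb_superset[OF T])
  finally show ?thesis .
qed

lemma lincomb_add:
  assumes "finite {x. c x \<noteq> 0}" and "finite {x. c' x \<noteq> 0}"
  shows "lincomb (\<lambda>y. c y + c' y) F = lincomb c F + lincomb c' F"
proof -
  let ?T = "{x. c x \<noteq> 0} \<union> {x. c' x \<noteq> 0}"
  have "finite ?T" "{x. c x + c' x \<noteq> 0} \<subseteq> ?T" using assms by auto
  then show ?thesis
    by (simp add: lincomb_superset[of ?T] sum.distrib distrib_right)
qed

lemma lincomb_diff:
  assumes "finite {x. c x \<noteq> 0}" and "finite {x. c' x \<noteq> 0}"
  shows "lincomb (\<lambda>y. c y - c' y) F = lincomb c F - lincomb c' F"
proof -
  let ?T = "{x. c x \<noteq> 0} \<union> {x. c' x \<noteq> 0}"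
  have "finite ?T" "{x. c x - c' x \<noteq> 0} \<subseteq> ?T" using assms by auto
  then show ?thesis
    by (simp add: lincomb_superset[of ?T] sum_subtractf left_diff_distrib)
qed

lemma lincomb_scale:
  assumes "finite {x. c x \<noteq> 0}"
  shows "lincomb (\<lambda>y. a * c y) F = of_int a * lincomb c F"
proof -
  have "{x. a * c x \<noteq> 0} \<subseteq> {x. c x \<noteq> 0}" by auto
  then show ?thesis
    using assms by (simp add: lincomb_superset[of "{x. c x \<noteq> 0}"] sum_distrib_left mult.assoc)
qed

lemma nonarch_abs_lincomb_le:
  assumes "nonarch_abs v" and "\<And>x. c x \<noteq> 0 \<Longrightarrow> v (F x) \<le> B" and "B \<ge> 0"
  shows "v (lincomb c F) \<le> B"
  unfolding lincomb_def
  by (rule nonarch_abs_sum_le[OF assms(1) _ assms(3)])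
     (use order_trans[OF nonarch_abs_of_int_mult_le[OF assms(1)] assms(2)] in auto)

section \<open>Linear sections of integral linear maps\<close>

lemma int_ideal_principal:
  fixes H :: "int set"
  assumes "0 \<in> H" and add: "\<And>a b. a \<in> H \<Longrightarrow> b \<in> H \<Longrightarrow> a + b \<in> H"
    and scale: "\<And>a k. a \<in> H \<Longrightarrow> k * a \<in> H"
  shows "\<exists>m\<in>H. \<forall>h\<in>H. m dvd h"
proof (cases "H \<subseteq> {0}")
  case True
  then show ?thesis using assms(1) by auto
next
  case False
  then obtain h0 where h0: "h0 \<in> H" "h0 \<noteq> 0" by auto
  have "\<bar>h0\<bar> \<in> H" using scale[OF h0(1), of "sgn h0"] by (simp add: abs_sgn mult.commute)
  then have ex: "\<exists>n::nat. n > 0 \<and> int n \<in> H"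
    using h0(2) by (intro exI[of _ "nat \<bar>h0\<bar>"]) auto
  define m where "m = (LEAST n::nat. n > 0 \<and> int n \<in> H)"
  have m: "m > 0" "int m \<in> H" using LeastI_ex[OF ex] unfolding m_def by auto
  have m_least: "m \<le> n" if "n > 0" "int n \<in> H" for n
    unfolding m_def by (rule Least_le) (use that in auto)
  have "int m dvd h" if h: "h \<in> H" for h
  proof -
    have "h mod int m = h + (- (h div int m)) * int m" by (simp add: minus_div_mult_eq_mod [symmetric])
    then have "h mod int m \<in> H" using add[OF h scale[OF m(2)]] by presburger
    moreover have "h mod int m < int m" "h mod int m \<ge> 0" using m(1) by simp_all
    ultimately have "h mod int m = 0"
      using m_least[of "nat (h mod int m)"] by fastforce
    then show ?thesis by (simp add: dvd_eq_mod_eq_0)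
  qed
  then show ?thesis using m(2) by blast
qed

definition linear_section_on :: "('x \<Rightarrow> int) set \<Rightarrow> ('y \<Rightarrow> int) set
    \<Rightarrow> (('y \<Rightarrow> int) \<Rightarrow> 'x \<Rightarrow> int) \<Rightarrow> (('x \<Rightarrow> int) \<Rightarrow> 'y \<Rightarrow> int) \<Rightarrow> bool" where
  "linear_section_on B Cs d s \<longleftrightarrow>
     (\<forall>b\<in>B. s b \<in> Cs \<and> d (s b) = b) \<and>
     (\<forall>b\<in>B. \<forall>b'\<in>B. s (\<lambda>x. b x + b' x) = (\<lambda>y. s b y + s b' y)) \<and>
     (\<forall>b\<in>B. \<forall>k. s (\<lambda>x. k * b x) = (\<lambda>y. k * s b y))"

lemma linear_section_onD:
  assumes "linear_section_on B Cs d s" and "b \<in> B"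
  shows linear_section_on_mem: "s b \<in> Cs"
    and linear_section_on_inverse: "d (s b) = b"
    and linear_section_on_add: "b' \<in> B \<Longrightarrow> s (\<lambda>x. b x + b' x) = (\<lambda>y. s b y + s b' y)"
    and linear_section_on_scale: "s (\<lambda>x. k * b x) = (\<lambda>y. k * s b y)"
  using assms unfolding linear_section_on_def by blast+

locale int_linear_map =
  fixes Cs :: "('y \<Rightarrow> int) set" and d :: "('y \<Rightarrow> int) \<Rightarrow> 'x \<Rightarrow> int"
  assumes zero_mem: "(\<lambda>_. 0) \<in> Cs"
    and add_mem: "c \<in> Cs \<Longrightarrow> c' \<in> Cs \<Longrightarrow> (\<lambda>y. c y + c' y) \<in> Cs"
    and scale_mem: "c \<in> Cs \<Longrightarrow> (\<lambda>y. k * c y) \<in> Cs"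
    and map_add: "c \<in> Cs \<Longrightarrow> c' \<in> Cs \<Longrightarrow> d (\<lambda>y. c y + c' y) = (\<lambda>x. d c x + d c' x)"
    and map_scale: "c \<in> Cs \<Longrightarrow> d (\<lambda>y. k * c y) = (\<lambda>x. k * d c x)"
    and finite_support: "c \<in> Cs \<Longrightarrow> finite {x. d c x \<noteq> 0}"
begin

lemma map_zero: "d (\<lambda>_. 0) = (\<lambda>_. 0)"
  using map_scale[OF zero_mem, of 0] by simp

lemma image_zero: "(\<lambda>_. 0) \<in> d ` Cs"
  using image_eqI[where f = d, OF map_zero[symmetric] zero_mem] .

lemma image_add:
  assumes "b \<in> d ` Cs" and "b' \<in> d ` Cs"
  shows "(\<lambda>x. b x + b' x) \<in> d ` Cs"
proof -
  obtain c c' where c: "c \<in> Cs" "c' \<in> Cs" and "b = d c" "b' = d c'" using assms by blast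
  then have "(\<lambda>x. b x + b' x) = d (\<lambda>y. c y + c' y)" using map_add[OF c] by simp
  then show ?thesis by (rule image_eqI[OF _ add_mem[OF c]])
qed

lemma image_scale:
  assumes "b \<in> d ` Cs"
  shows "(\<lambda>x. k * b x) \<in> d ` Cs"
proof -
  obtain c where c: "c \<in> Cs" and "b = d c" using assms by blast
  then have "(\<lambda>x. k * b x) = d (\<lambda>y. k * c y)" using map_scale[OF c] by simp
  then show ?thesis by (rule image_eqI[OF _ scale_mem[OF c]])
qed

definition image_within :: "'x set \<Rightarrow> ('x \<Rightarrow> int) set" where
  "image_within Y = {b \<in> d ` Cs. {x. b x \<noteq> 0} \<subseteq> Y}"

lemma image_within_zero: "(\<lambda>_. 0) \<in> image_within Y"
  using image_zero by (simp add: image_within_def)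

lemma image_within_add:
  assumes "b \<in> image_within Y" and "b' \<in> image_within Y"
  shows "(\<lambda>x. b x + b' x) \<in> image_within Y"
proof -
  have "{x. b x + b' x \<noteq> 0} \<subseteq> {x. b x \<noteq> 0} \<union> {x. b' x \<noteq> 0}" by auto
  then show ?thesis using assms image_add unfolding image_within_def by blast
qed

lemma image_within_scale: "b \<in> image_within Y \<Longrightarrow> (\<lambda>x. k * b x) \<in> image_within Y"
  unfolding image_within_def using image_scale by auto

lemma image_within_mono: "Y \<subseteq> Y' \<Longrightarrow> image_within Y \<subseteq> image_within Y'"
  unfolding image_within_def by blast

lemma image_within_UNIV: "image_within UNIV = d ` Cs"
  unfolding image_within_def by blast

text \<open>A partial section is encoded as a single set: its \<open>Inl\<close> part is a set \<open>Y\<close> of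
  coordinates, its \<open>Inr\<close> part the graph of an additive section of \<open>d\<close> over the image
  elements supported in \<open>Y\<close>. Extension of partial sections is then plain inclusion, so
  Zorn's lemma for sets applies.\<close>

definition partial_section :: "('x + ('x \<Rightarrow> int) \<times> ('y \<Rightarrow> int)) set \<Rightarrow> bool" where
  "partial_section S \<longleftrightarrow>
     (\<forall>b c. Inr (b, c) \<in> S \<longrightarrow> b \<in> image_within {x. Inl x \<in> S} \<and> c \<in> Cs \<and> d c = b) \<and>
     (\<forall>b\<in>image_within {x. Inl x \<in> S}. \<exists>c. Inr (b, c) \<in> S) \<and>
     (\<forall>b c c'. Inr (b, c) \<in> S \<longrightarrow> Inr (b, c') \<in> S \<longrightarrow> c = c') \<and>
     (\<forall>b c b' c'. Inr (b, c) \<in> S \<longrightarrow> Inr (b', c') \<in> S \<longrightarrow>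
        Inr (\<lambda>x. b x + b' x, \<lambda>y. c y + c' y) \<in> S) \<and>
     (\<forall>b c k. Inr (b, c) \<in> S \<longrightarrow> Inr (\<lambda>x. k * b x, \<lambda>y. k * c y) \<in> S)"

definition section_of :: "('x + ('x \<Rightarrow> int) \<times> ('y \<Rightarrow> int)) set \<Rightarrow> ('x \<Rightarrow> int) \<Rightarrow> 'y \<Rightarrow> int" where
  "section_of S b = (THE c. Inr (b, c) \<in> S)"

lemma partial_sectionD:
  assumes "partial_section S"
  shows partial_section_graphD:
      "Inr (b, c) \<in> S \<Longrightarrow> b \<in> image_within {x. Inl x \<in> S} \<and> c \<in> Cs \<and> d c = b"
    and partial_section_defined: "b \<in> image_within {x. Inl x \<in> S} \<Longrightarrow> \<exists>c. Inr (b, c) \<in> S"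
    and partial_section_unique: "Inr (b, c) \<in> S \<Longrightarrow> Inr (b, c') \<in> S \<Longrightarrow> c = c'"
    and partial_section_add: "Inr (b, c) \<in> S \<Longrightarrow> Inr (b', c') \<in> S \<Longrightarrow>
        Inr (\<lambda>x. b x + b' x, \<lambda>y. c y + c' y) \<in> S"
    and partial_section_scale: "Inr (b, c) \<in> S \<Longrightarrow> Inr (\<lambda>x. k * b x, \<lambda>y. k * c y) \<in> S"
  using assms unfolding partial_section_def by blast+

lemma partial_sectionI:
  assumes "\<And>b c. Inr (b, c) \<in> S \<Longrightarrow> b \<in> image_within {x. Inl x \<in> S} \<and> c \<in> Cs \<and> d c = b"
    and "\<And>b. b \<in> image_within {x. Inl x \<in> S} \<Longrightarrow> \<exists>c. Inr (b, c) \<in> S"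
    and "\<And>b c c'. Inr (b, c) \<in> S \<Longrightarrow> Inr (b, c') \<in> S \<Longrightarrow> c = c'"
    and "\<And>b c b' c'. Inr (b, c) \<in> S \<Longrightarrow> Inr (b', c') \<in> S \<Longrightarrow>
        Inr (\<lambda>x. b x + b' x, \<lambda>y. c y + c' y) \<in> S"
    and "\<And>b c k. Inr (b, c) \<in> S \<Longrightarrow> Inr (\<lambda>x. k * b x, \<lambda>y. k * c y) \<in> S"
  shows "partial_section S"
  using assms unfolding partial_section_def by blast

lemma section_of_eq:
  assumes "partial_section S" and "Inr (b, c) \<in> S"
  shows "section_of S b = c"
  unfolding section_of_def
  using assms partial_section_unique[OF assms(1)] by (intro the_equality) blast+

lemma partial_section_graph:
  assumes "partial_section S" and "b \<in> image_within {x. Inl x \<in> S}"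
  shows "Inr (b, section_of S b) \<in> S"
proof -
  obtain c where "Inr (b, c) \<in> S" using partial_section_defined[OF assms] by blast
  then show ?thesis using section_of_eq[OF assms(1)] by simp
qed

lemma partial_section_linear:
  assumes S: "partial_section S"
  shows "linear_section_on (image_within {x. Inl x \<in> S}) Cs d (section_of S)"
  unfolding linear_section_on_def
proof (intro conjI ballI allI)
  fix b b' k
  assume b: "b \<in> image_within {x. Inl x \<in> S}"
  note graph_b = partial_section_graph[OF S b]
  show "section_of S b \<in> Cs" "d (section_of S b) = b"
    using partial_section_graphD[OF S graph_b] by blast+
  show "section_of S (\<lambda>x. k * b x) = (\<lambda>y. k * section_of S b y)"
    by (rule section_of_eq[OF S partial_section_scale[OF S graph_b]])
  assume "b' \<in> image_within {x. Inl x \<in> S}"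
  then show "section_of S (\<lambda>x. b x + b' x) = (\<lambda>y. section_of S b y + section_of S b' y)"
    by (rule section_of_eq[OF S partial_section_add[OF S graph_b partial_section_graph[OF S]]])
qed

lemma partial_section_zero: "partial_section {Inr (\<lambda>_. 0, \<lambda>_. 0)}"
proof (rule partial_sectionI)
  have "image_within {} = {\<lambda>_. 0}"
    using image_within_zero by (auto simp: image_within_def)
  then show "b \<in> image_within {x. Inl x \<in> {Inr (\<lambda>_. 0, \<lambda>_. 0)}} \<Longrightarrow>
      \<exists>c. Inr (b, c) \<in> {Inr (\<lambda>_. 0, \<lambda>_. 0)}" for b
    by simp
  show "Inr (b, c) \<in> {Inr (\<lambda>_. 0, \<lambda>_. 0)} \<Longrightarrow>
      b \<in> image_within {x. Inl x \<in> {Inr (\<lambda>_. 0, \<lambda>_. 0)}} \<and> c \<in> Cs \<and> d c = b" for b c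
    using image_within_zero zero_mem map_zero by simp
qed auto

lemma partial_section_Union:
  assumes C: "subset.chain {S. partial_section S} C" and "C \<noteq> {}"
  shows "partial_section (\<Union>C)"
proof -
  have S: "partial_section S" if "S \<in> C" for S
    using C that by (auto simp: subset.chain_def)
  have common: "\<exists>S\<in>C. p \<in> S \<and> q \<in> S" if "p \<in> \<Union>C" "q \<in> \<Union>C" for p q
    using C that unfolding subset.chain_def by blast
  have graph: "b \<in> image_within {x. Inl x \<in> \<Union>C} \<and> c \<in> Cs \<and> d c = b"
    if bc: "Inr (b, c) \<in> \<Union>C" for b c
  proof -
    obtain T where T: "T \<in> C" "Inr (b, c) \<in> T" using bc by blast
    have "image_within {x. Inl x \<in> T} \<subseteq> image_within {x. Inl x \<in> \<Union>C}"
      using T(1) by (intro image_within_mono) blast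
    then show ?thesis using partial_section_graphD[OF S[OF T(1)] T(2)] by blast
  qed
  have defined: "\<exists>c. Inr (b, c) \<in> \<Union>C" if b: "b \<in> image_within {x. Inl x \<in> \<Union>C}" for b
  proof -
    have "finite (Inl ` {x. b x \<noteq> 0})" "Inl ` {x. b x \<noteq> 0} \<subseteq> \<Union>C"
      using b finite_support unfolding image_within_def by auto
    then obtain T where T: "T \<in> C" "Inl ` {x. b x \<noteq> 0} \<subseteq> T"
      using finite_subset_Union_chain[OF _ _ \<open>C \<noteq> {}\<close> C] by metis
    then have "b \<in> image_within {x. Inl x \<in> T}" using b unfolding image_within_def by auto
    then show ?thesis using partial_section_defined[OF S[OF T(1)]] T(1) by blast
  qed
  show ?thesis
  proof (rule partial_sectionI)
    fix b c c' assume "Inr (b, c) \<in> \<Union>C" "Inr (b, c') \<in> \<Union>C"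
    then obtain T where "T \<in> C" "Inr (b, c) \<in> T" "Inr (b, c') \<in> T" using common by blast
    then show "c = c'" using partial_section_unique S by blast
  next
    fix b c b' c' assume "Inr (b, c) \<in> \<Union>C" "Inr (b', c') \<in> \<Union>C"
    then obtain T where "T \<in> C" "Inr (b, c) \<in> T" "Inr (b', c') \<in> T" using common by blast
    then show "Inr (\<lambda>x. b x + b' x, \<lambda>y. c y + c' y) \<in> \<Union>C"
      using partial_section_add S by blast
  next
    fix b c k assume "Inr (b, c) \<in> \<Union>C"
    then obtain T where "T \<in> C" "Inr (b, c) \<in> T" by blast
    then show "Inr (\<lambda>x. k * b x, \<lambda>y. k * c y) \<in> \<Union>C"
      using partial_section_scale S by blast
  qed (use graph defined in blast)+
qed

lemma image_within_insert_generator: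
  "\<exists>b0\<in>image_within (insert x Y). \<forall>b\<in>image_within (insert x Y). b0 x dvd b x"
proof -
  let ?D = "image_within (insert x Y)"
  have "\<exists>m\<in>(\<lambda>b. b x) ` ?D. \<forall>h\<in>(\<lambda>b. b x) ` ?D. m dvd h"
  proof (rule int_ideal_principal)
    show "0 \<in> (\<lambda>b. b x) ` ?D" using image_within_zero by force
  next
    fix m m' assume "m \<in> (\<lambda>b. b x) ` ?D" "m' \<in> (\<lambda>b. b x) ` ?D"
    then obtain b b' where "b \<in> ?D" "b' \<in> ?D" "m = b x" "m' = b' x" by blast
    then show "m + m' \<in> (\<lambda>b. b x) ` ?D"
      using image_within_add by (intro image_eqI[of _ _ "\<lambda>z. b z + b' z"]) auto
  next
    fix m k assume "m \<in> (\<lambda>b. b x) ` ?D"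
    then obtain b where "b \<in> ?D" "m = b x" by blast
    then show "k * m \<in> (\<lambda>b. b x) ` ?D"
      using image_within_scale by (intro image_eqI[of _ _ "\<lambda>z. k * b z"]) auto
  qed
  then show ?thesis by blast
qed

lemma image_within_insert_reduce:
  assumes b: "b \<in> image_within (insert x Y)" and b0: "b0 \<in> image_within (insert x Y)"
    and "b0 x dvd b x"
  shows "(\<lambda>z. b z + (- (b x div b0 x)) * b0 z) \<in> image_within Y"
proof -
  let ?r = "\<lambda>z. b z + (- (b x div b0 x)) * b0 z"
  have "?r \<in> d ` Cs"
    by (rule image_add[OF _ image_scale]) (use b b0 in \<open>auto simp: image_within_def\<close>)
  moreover have "{z. ?r z \<noteq> 0} \<subseteq> Y"
  proof
    fix z assume z: "z \<in> {z. ?r z \<noteq> 0}"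
    have "?r x = 0" using \<open>b0 x dvd b x\<close> by simp
    then have "z \<noteq> x" using z by auto
    moreover have "b z \<noteq> 0 \<or> b0 z \<noteq> 0" using z by auto
    ultimately show "z \<in> Y" using b b0 unfolding image_within_def by blast
  qed
  ultimately show ?thesis unfolding image_within_def by blast
qed

text \<open>Extending a section \<open>\<sigma>\<close> from \<open>Y\<close> to \<open>insert x Y\<close>: with \<open>b0\<close> generating the
  ideal of \<open>x\<close>-coordinates and \<open>d c0 = b0\<close>, write \<open>b = q b0 + r\<close> with \<open>q = b x div b0 x\<close>,
  so that \<open>r\<close> is supported in \<open>Y\<close>, and put \<open>s b = q c0 + \<sigma> r\<close>.\<close>

lemma linear_section_on_insert:
  assumes lin: "linear_section_on (image_within Y) Cs d \<sigma>"
    and b0: "b0 \<in> image_within (insert x Y)"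
    and b0_dvd: "\<forall>b\<in>image_within (insert x Y). b0 x dvd b x"
    and c0: "c0 \<in> Cs" "d c0 = b0"
  shows "linear_section_on (image_within (insert x Y)) Cs d
    (\<lambda>b y. (b x div b0 x) * c0 y + \<sigma> (\<lambda>z. b z + (- (b x div b0 x)) * b0 z) y)"
proof -
  let ?D = "image_within (insert x Y)"
  define q where "q b = b x div b0 x" for b :: "'x \<Rightarrow> int"
  define r where "r b = (\<lambda>z. b z + (- q b) * b0 z)" for b
  define s where "s b = (\<lambda>y. q b * c0 y + \<sigma> (r b) y)" for b
  have q_add: "q (\<lambda>z. b z + b' z) = q b + q b'" if "b \<in> ?D" "b' \<in> ?D" for b b'
    unfolding q_def using b0_dvd that by (simp add: div_add)
  have q_scale: "q (\<lambda>z. k * b z) = k * q b" if "b \<in> ?D" for b k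
    unfolding q_def using b0_dvd that by (simp add: div_mult_swap)
  have r_add: "r (\<lambda>z. b z + b' z) = (\<lambda>z. r b z + r b' z)" if "b \<in> ?D" "b' \<in> ?D" for b b'
    unfolding r_def q_add[OF that] by (simp add: algebra_simps)
  have r_scale: "r (\<lambda>z. k * b z) = (\<lambda>z. k * r b z)" if "b \<in> ?D" for b k
    unfolding r_def q_scale[OF that] by (simp add: algebra_simps)
  have r_within: "r b \<in> image_within Y" if b: "b \<in> ?D" for b
    unfolding r_def q_def by (rule image_within_insert_reduce[OF b b0 bspec[OF b0_dvd b]])
  have "linear_section_on ?D Cs d s"
    unfolding linear_section_on_def
  proof (intro conjI ballI allI)
    fix b b' k assume b: "b \<in> ?D"
    note rb = r_within[OF b]
    show "s b \<in> Cs"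
      unfolding s_def by (rule add_mem[OF scale_mem[OF c0(1)] linear_section_on_mem[OF lin rb]])
    have "d (s b) = (\<lambda>z. q b * b0 z + r b z)"
      unfolding s_def using map_add[OF scale_mem[OF c0(1)] linear_section_on_mem[OF lin rb]]
      by (simp add: map_scale[OF c0(1)] c0(2) linear_section_on_inverse[OF lin rb])
    then show "d (s b) = b" by (simp add: r_def)
    show "s (\<lambda>x. k * b x) = (\<lambda>y. k * s b y)"
      unfolding s_def q_scale[OF b] r_scale[OF b] linear_section_on_scale[OF lin rb]
      by (simp add: algebra_simps)
    assume b': "b' \<in> ?D"
    show "s (\<lambda>x. b x + b' x) = (\<lambda>y. s b y + s b' y)"
      unfolding s_def q_add[OF b b'] r_add[OF b b']
        linear_section_on_add[OF lin rb r_within[OF b']]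
      by (simp add: algebra_simps)
  qed
  moreover have "s = (\<lambda>b y. (b x div b0 x) * c0 y + \<sigma> (\<lambda>z. b z + (- (b x div b0 x)) * b0 z) y)"
    by (simp add: fun_eq_iff s_def r_def q_def)
  ultimately show ?thesis by simp
qed

lemma partial_section_extension:
  assumes S: "partial_section S" and x: "Inl x \<notin> S"
  defines "Y \<equiv> {z. Inl z \<in> S}"
  obtains s where "linear_section_on (image_within (insert x Y)) Cs d s"
    and "\<And>b. b \<in> image_within Y \<Longrightarrow> s b = section_of S b"
proof -
  obtain b0 where b0: "b0 \<in> image_within (insert x Y)"
    and b0_dvd: "\<forall>b\<in>image_within (insert x Y). b0 x dvd b x"
    using image_within_insert_generator by blast
  obtain c0 where c0: "c0 \<in> Cs" "d c0 = b0" using b0 unfolding image_within_def by blast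
  have lin: "linear_section_on (image_within Y) Cs d (section_of S)"
    using partial_section_linear[OF S] unfolding Y_def .
  have agree: "(\<lambda>y. (b x div b0 x) * c0 y + section_of S (\<lambda>z. b z + (- (b x div b0 x)) * b0 z) y) =
      section_of S b" if b: "b \<in> image_within Y" for b
  proof -
    have "b x = 0" using b x unfolding image_within_def Y_def by blast
    then show ?thesis by simp
  qed
  show ?thesis by (rule that[OF linear_section_on_insert[OF lin b0 b0_dvd c0] agree])
qed

lemma partial_section_extend:
  assumes S: "partial_section S" and x: "Inl x \<notin> S"
  obtains S' where "partial_section S'" and "S \<subset> S'"
proof -
  let ?Y = "{z. Inl z \<in> S}"
  let ?D = "image_within (insert x ?Y)"
  obtain s where s: "linear_section_on ?D Cs d s"
    and agree: "\<And>b. b \<in> image_within ?Y \<Longrightarrow> s b = section_of S b"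
    using partial_section_extension[OF S x] by blast
  define S' where "S' = S \<union> {Inl x} \<union> (\<lambda>b. Inr (b, s b)) ` ?D"
  have Inl_S': "{z. Inl z \<in> S'} = insert x ?Y" by (auto simp: S'_def)
  have Inr_S': "Inr (b, c) \<in> S' \<longleftrightarrow> b \<in> ?D \<and> c = s b" for b c
  proof
    assume "Inr (b, c) \<in> S'"
    moreover have "b \<in> ?D \<and> c = s b" if "Inr (b, c) \<in> S"
    proof -
      have "b \<in> image_within ?Y" using partial_section_graphD[OF S that] by blast
      then show ?thesis
        using image_within_mono[of ?Y "insert x ?Y"] agree section_of_eq[OF S that] by auto
    qed
    ultimately show "b \<in> ?D \<and> c = s b" by (auto simp: S'_def)
  qed (auto simp: S'_def)
  have "partial_section S'"
  proof (rule partial_sectionI)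
    fix b c assume "Inr (b, c) \<in> S'"
    then show "b \<in> image_within {z. Inl z \<in> S'} \<and> c \<in> Cs \<and> d c = b"
      unfolding Inl_S' Inr_S' using linear_section_on_mem[OF s] linear_section_on_inverse[OF s]
      by blast
  next
    fix b assume "b \<in> image_within {z. Inl z \<in> S'}"
    then show "\<exists>c. Inr (b, c) \<in> S'" unfolding Inl_S' Inr_S' by blast
  next
    fix b c c' assume "Inr (b, c) \<in> S'" "Inr (b, c') \<in> S'"
    then show "c = c'" unfolding Inr_S' by blast
  next
    fix b c b' c' assume "Inr (b, c) \<in> S'" "Inr (b', c') \<in> S'"
    then show "Inr (\<lambda>x. b x + b' x, \<lambda>y. c y + c' y) \<in> S'"
      unfolding Inr_S' using image_within_add linear_section_on_add[OF s] by simp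
  next
    fix b c k assume "Inr (b, c) \<in> S'"
    then show "Inr (\<lambda>x. k * b x, \<lambda>y. k * c y) \<in> S'"
      unfolding Inr_S' using image_within_scale linear_section_on_scale[OF s] by simp
  qed
  moreover have "S \<subset> S'" using x by (auto simp: S'_def)
  ultimately show ?thesis by (rule that)
qed

theorem exists_linear_section: "\<exists>s. linear_section_on (d ` Cs) Cs d s"
proof -
  have "\<forall>C\<in>Zorn.chains {S. partial_section S}. \<exists>U\<in>{S. partial_section S}. \<forall>S\<in>C. S \<subseteq> U"
  proof
    fix C assume C: "C \<in> Zorn.chains {S. partial_section S}"
    show "\<exists>U\<in>{S. partial_section S}. \<forall>S\<in>C. S \<subseteq> U"
    proof (cases "C = {}")
      case True
      then show ?thesis using partial_section_zero by blast
    next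
      case False
      then have "partial_section (\<Union>C)"
        using partial_section_Union C by (simp add: chains_alt_def)
      then show ?thesis by blast
    qed
  qed
  then have "\<exists>M\<in>{S. partial_section S}. \<forall>S\<in>{S. partial_section S}. M \<subseteq> S \<longrightarrow> S = M"
    by (rule Zorn_Lemma2)
  then obtain M where M: "partial_section M"
    and maximal: "\<And>S. partial_section S \<Longrightarrow> M \<subseteq> S \<Longrightarrow> S = M"
    by blast
  have "Inl x \<in> M" for x
  proof (rule ccontr)
    assume "Inl x \<notin> M"
    then obtain S' where "partial_section S'" "M \<subset> S'" by (rule partial_section_extend[OF M])
    then show False using maximal by blast
  qed
  then have "{x. Inl x \<in> M} = UNIV" by blast
  then have "linear_section_on (d ` Cs) Cs d (section_of M)"
    using partial_section_linear[OF M] by (simp add: image_within_UNIV)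
  then show ?thesis by blast
qed


lemma linear_section_on_sum:
  assumes s: "linear_section_on (d ` Cs) Cs d s"
    and "finite I" and "\<And>i. i \<in> I \<Longrightarrow> b i \<in> d ` Cs"
  shows "s (\<lambda>x. \<Sum>i\<in>I. a i * b i x) = (\<lambda>y. \<Sum>i\<in>I. a i * s (b i) y)"
proof -
  have "(\<lambda>x. \<Sum>i\<in>I. a i * b i x) \<in> d ` Cs \<and>
        s (\<lambda>x. \<Sum>i\<in>I. a i * b i x) = (\<lambda>y. \<Sum>i\<in>I. a i * s (b i) y)"
    using assms(2,3)
  proof (induction I rule: finite_induct)
    case empty
    show ?case using image_zero linear_section_on_scale[OF s image_zero, of 0] by simp
  next
    case (insert j I)
    let ?u = "\<lambda>x. \<Sum>i\<in>I. a i * b i x"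
    have u: "?u \<in> d ` Cs" "s ?u = (\<lambda>y. \<Sum>i\<in>I. a i * s (b i) y)" using insert by auto
    have bj: "(\<lambda>x. a j * b j x) \<in> d ` Cs" using image_scale insert.prems by simp
    have split: "(\<lambda>x. \<Sum>i\<in>insert j I. a i * b i x) = (\<lambda>x. a j * b j x + ?u x)"
      using insert.hyps by simp
    show ?case
      unfolding split
      using image_add[OF bj u(1)] linear_section_on_add[OF s bj u(1)] u(2) insert
        linear_section_on_scale[OF s, of "b j" "a j"] by simp
  qed
  then show ?thesis ..
qed

end

section \<open>The integral bar complex\<close>

definition face :: "('a, 'b) monoid_scheme \<Rightarrow> nat \<Rightarrow> nat \<Rightarrow> 'a list \<Rightarrow> 'a list" where
  "face G m i gs = (if i = 0 then tl gs else if i = m then butlast gs else face_mul G i gs)"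

lemma length_face:
  assumes "length gs = m" and "m \<ge> 1" and "i \<le> m"
  shows "length (face G m i gs) = m - 1"
  using assms by (auto simp: face_def face_mul_def)

lemma nth_face:
  assumes "length gs = m" and "i \<le> m" and "p < m - 1"
  shows "face G m i gs ! p =
    (if p + 1 < i then gs ! p else if p + 1 = i then gs ! p \<otimes>\<^bsub>G\<^esub> gs ! (p + 1) else gs ! (p + 1))"
  using assms by (auto simp: face_def face_mul_def nth_tl nth_butlast nth_append min_def)

lemma face_in_tuples:
  assumes "group G" and "gs \<in> tuples G m" and "m \<ge> 1" and "i \<le> m"
  shows "face G m i gs \<in> tuples G (m - 1)"
proof -
  have gs: "length gs = m" "\<And>q. q < m \<Longrightarrow> gs ! q \<in> carrier G"
    using assms(2) unfolding tuples_def by auto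
  have "face G m i gs ! p \<in> carrier G" if "p < m - 1" for p
    using nth_face[where G = G, OF gs(1) assms(4) that] gs(2) that group.is_monoid[OF assms(1)]
    by (auto intro: monoid.m_closed)
  then show ?thesis
    using length_face[OF gs(1) assms(3,4)] unfolding tuples_def by (auto simp: in_set_conv_nth)
qed

lemma face_face:
  assumes "group G" and "gs \<in> tuples G m" and "m \<ge> 2" and "i < j" and "j \<le> m"
  shows "face G (m - 1) i (face G m j gs) = face G (m - 1) (j - 1) (face G m i gs)"
proof (rule nth_equalityI)
  have gs: "length gs = m" "\<And>q. q < m \<Longrightarrow> gs ! q \<in> carrier G"
    using assms(2) unfolding tuples_def by auto
  have len: "length (face G m j gs) = m - 1" "length (face G m i gs) = m - 1"
    using gs(1) assms by (auto simp: length_face)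
  then show "length (face G (m - 1) i (face G m j gs)) = length (face G (m - 1) (j - 1) (face G m i gs))"
    using assms by (simp add: length_face)
  fix p assume "p < length (face G (m - 1) i (face G m j gs))"
  then have p: "p < m - 2" using assms len by (simp add: length_face)
  have nth_face_j: "face G m j gs ! q = (if q + 1 < j then gs ! q
      else if q + 1 = j then gs ! q \<otimes>\<^bsub>G\<^esub> gs ! (q + 1) else gs ! (q + 1))" if "q < m - 1" for q
    using nth_face[where G = G, OF gs(1), of j q] assms that by auto
  have nth_face_i: "face G m i gs ! q = (if q + 1 < i then gs ! q
      else if q + 1 = i then gs ! q \<otimes>\<^bsub>G\<^esub> gs ! (q + 1) else gs ! (q + 1))" if "q < m - 1" for q
    using nth_face[where G = G, OF gs(1), of i q] assms that by auto
  have "gs ! p \<otimes>\<^bsub>G\<^esub> gs ! (p + 1) \<otimes>\<^bsub>G\<^esub> gs ! (p + 2) = gs ! p \<otimes>\<^bsub>G\<^esub> (gs ! (p + 1) \<otimes>\<^bsub>G\<^esub> gs ! (p + 2))"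
    using gs(2) p by (intro monoid.m_assoc[OF group.is_monoid[OF assms(1)]]) auto
  moreover have "face G (m - 1) i (face G m j gs) ! p = (if p + 1 < i then face G m j gs ! p
      else if p + 1 = i then face G m j gs ! p \<otimes>\<^bsub>G\<^esub> face G m j gs ! (p + 1)
      else face G m j gs ! (p + 1))"
    using nth_face[where G = G, OF len(1), of i p] assms p by auto
  moreover have "face G (m - 1) (j - 1) (face G m i gs) ! p = (if p + 1 < j - 1 then face G m i gs ! p
      else if p + 1 = j - 1 then face G m i gs ! p \<otimes>\<^bsub>G\<^esub> face G m i gs ! (p + 1)
      else face G m i gs ! (p + 1))"
    using nth_face[where G = G, OF len(2), of "j - 1" p] assms p by auto
  ultimately show "face G (m - 1) i (face G m j gs) ! p = face G (m - 1) (j - 1) (face G m i gs) ! p"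
    using p assms by (auto simp: nth_face_i nth_face_j)
qed

text \<open>The sign cancellation behind \<open>\<partial>\<partial> = 0\<close>: the terms \<open>(i, j)\<close> with \<open>j < i\<close> and
  \<open>(j, i - 1)\<close> cancel in pairs.\<close>

lemma alternating_double_sum_cancel:
  fixes F :: "nat \<Rightarrow> nat \<Rightarrow> 'c::comm_ring_1"
  assumes "m \<ge> 1" and F: "\<And>i j. j < i \<Longrightarrow> i \<le> m \<Longrightarrow> F j i = F (i - 1) j"
  shows "(\<Sum>i\<in>{0..m}. \<Sum>j\<in>{0..m - 1}. (-1) ^ (i + j) * F j i) = 0"
proof -
  define t where "t p = (-1) ^ (fst p + snd p) * F (snd p) (fst p)" for p
  define P1 where "P1 = {p \<in> {0..m} \<times> {0..m - 1}. snd p < fst p}"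
  define P2 where "P2 = {p \<in> {0..m} \<times> {0..m - 1}. fst p \<le> snd p}"
  have split: "{0..m} \<times> {0..m - 1} = P1 \<union> P2" "P1 \<inter> P2 = {}"
    unfolding P1_def P2_def by auto
  have fin: "finite P1" "finite P2"
    unfolding P1_def P2_def by (auto intro: finite_subset[of _ "{0..m} \<times> {0..m - 1}"])
  define h where "h p = (snd p + 1, fst p)" for p :: "nat \<times> nat"
  have "bij_betw h P2 P1"
    by (rule bij_betw_byWitness[where f' = "\<lambda>p. (snd p, fst p - 1)"])
       (use assms(1) in \<open>auto simp: h_def P1_def P2_def\<close>)
  then have "sum t P1 = (\<Sum>p\<in>P2. t (h p))" by (rule sum.reindex_bij_betw[symmetric])
  also have "\<dots> = - sum t P2"
  proof -
    have "F a (b + 1) = F b a" if "a \<le> b" "b \<le> m - 1" for a b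
      using F[of a "b + 1"] that assms(1) by simp
    then show ?thesis
      unfolding sum_negf[symmetric] by (intro sum.cong) (auto simp: t_def h_def P2_def add.commute)
  qed
  finally have "sum t P1 + sum t P2 = 0" by simp
  moreover have "(\<Sum>i\<in>{0..m}. \<Sum>j\<in>{0..m - 1}. (-1) ^ (i + j) * F j i) = sum t (P1 \<union> P2)"
    unfolding split(1)[symmetric] t_def by (simp add: sum.cartesian_product case_prod_beta)
  ultimately show ?thesis by (simp add: sum.union_disjoint[OF fin split(2)])
qed

lemma sum_first_middle_last:
  fixes f :: "nat \<Rightarrow> 'c::comm_monoid_add"
  assumes "m \<ge> 1"
  shows "(\<Sum>i\<in>{0..m}. f i) = f 0 + (\<Sum>i\<in>{1..m - 1}. f i) + f m"
proof -
  have "{0..m} = insert 0 (insert m {1..m - 1})" "0 \<notin> insert m {1..m - 1}" "m \<notin> {1..m - 1}"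
    using assms by auto
  then show ?thesis by (simp add: add_ac)
qed

lemma bd_basis_eq_faces:
  assumes "m \<ge> 1"
  shows "bd_basis G m gs = (\<lambda>y. \<Sum>i\<in>{0..m}. (-1) ^ i * ind (face G m i gs) y)"
proof
  fix y
  have "(\<Sum>i\<in>{1..m - 1}. (-1) ^ i * ind (face G m i gs) y) =
        (\<Sum>i\<in>{1..m - 1}. (-1) ^ i * ind (face_mul G i gs) y)"
    by (rule sum.cong) (auto simp: face_def)
  then show "bd_basis G m gs y = (\<Sum>i\<in>{0..m}. (-1) ^ i * ind (face G m i gs) y)"
    using assms unfolding sum_first_middle_last[OF assms] bd_basis_def by (simp add: face_def)
qed

lemma cobound_eq_faces:
  assumes "gs \<in> tuples G (k + 1)"
  shows "cobound G k f gs = (\<Sum>i\<in>{0..k + 1}. (-1) ^ i * f (face G (k + 1) i gs))"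
proof -
  have "(\<Sum>i\<in>{1..k}. (-1) ^ i * f (face G (k + 1) i gs)) = (\<Sum>i\<in>{1..k}. (-1) ^ i * f (face_mul G i gs))"
    by (rule sum.cong) (auto simp: face_def)
  moreover have "(\<Sum>i\<in>{0..k + 1}. (-1) ^ i * f (face G (k + 1) i gs)) =
      (-1) ^ 0 * f (face G (k + 1) 0 gs) + (\<Sum>i\<in>{1..k + 1 - 1}. (-1) ^ i * f (face G (k + 1) i gs))
        + (-1) ^ (k + 1) * f (face G (k + 1) (k + 1) gs)"
    by (rule sum_first_middle_last) simp
  ultimately show ?thesis using assms unfolding cobound_def by (simp add: face_def)
qed

lemma finite_support_bd_basis: "finite {y. bd_basis G m gs y \<noteq> 0}"
proof (cases "m = 0")
  case False
  have "{y. bd_basis G m gs y \<noteq> 0} \<subseteq> (\<lambda>i. face G m i gs) ` {0..m}"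
    using False by (auto simp: bd_basis_eq_faces ind_def elim!: sum.not_neutral_contains_not_neutral
        split: if_splits)
  then show ?thesis by (rule finite_subset) simp
qed (simp add: bd_basis_def)

lemma bd_eq_lincomb: "bd G k c y = lincomb c (\<lambda>x. bd_basis G k x y)"
  by (simp add: bd_def lincomb_def)

lemma chains_finite_support: "c \<in> chains G k \<Longrightarrow> finite {x. c x \<noteq> 0}"
  unfolding chains_def by blast

lemma chains_zero: "(\<lambda>_. 0) \<in> chains G k"
  unfolding chains_def by simp

lemma chains_ind: "x \<in> tuples G k \<Longrightarrow> ind x \<in> chains G k"
  unfolding chains_def ind_def by (auto intro: finite_subset[of _ "{x}"])

lemma chains_add:
  assumes "c \<in> chains G k" and "c' \<in> chains G k"
  shows "(\<lambda>y. c y + c' y) \<in> chains G k"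
proof -
  have "{x. c x + c' x \<noteq> 0} \<subseteq> {x. c x \<noteq> 0} \<union> {x. c' x \<noteq> 0}" by auto
  then show ?thesis using assms unfolding chains_def by (blast intro: finite_subset)
qed

lemma chains_scale: "c \<in> chains G k \<Longrightarrow> (\<lambda>y. a * c y) \<in> chains G k"
  unfolding chains_def by (auto intro: finite_subset[of _ "{x. c x \<noteq> 0}"])

lemma chains_diff: "c \<in> chains G k \<Longrightarrow> c' \<in> chains G k \<Longrightarrow> (\<lambda>y. c y - c' y) \<in> chains G k"
  using chains_add[OF _ chains_scale, of c G k c' "-1"] by simp

lemma finite_support_bd:
  assumes "finite {x. c x \<noteq> 0}"
  shows "finite {y. bd G k c y \<noteq> 0}"
proof -
  have "{y. bd G k c y \<noteq> 0} \<subseteq> (\<Union>x\<in>{x. c x \<noteq> 0}. {y. bd_basis G k x y \<noteq> 0})"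
    unfolding bd_def by (auto elim!: sum.not_neutral_contains_not_neutral)
  then show ?thesis by (rule finite_subset) (use assms finite_support_bd_basis in blast)
qed

lemma finite_support_ind: "finite {y. ind x y \<noteq> 0}"
  unfolding ind_def by (auto intro: finite_subset[of _ "{x}"])

lemma bd_sum:
  assumes "finite I" and "\<And>i. i \<in> I \<Longrightarrow> finite {x. c i x \<noteq> 0}"
  shows "bd G k (\<lambda>y. \<Sum>i\<in>I. a i * c i y) = (\<lambda>y. \<Sum>i\<in>I. a i * bd G k (c i) y)"
  by (simp add: fun_eq_iff bd_eq_lincomb lincomb_sum[OF assms])

lemma bd_diff:
  assumes "finite {x. c x \<noteq> 0}" and "finite {x. c' x \<noteq> 0}"
  shows "bd G k (\<lambda>y. c y - c' y) = (\<lambda>y. bd G k c y - bd G k c' y)"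
  using assms by (simp add: fun_eq_iff bd_eq_lincomb lincomb_diff)

lemma bd_ind: "bd G k (ind x) = bd_basis G k x"
  by (simp add: fun_eq_iff bd_eq_lincomb)

lemma int_linear_map_bd: "int_linear_map (chains G k) (bd G k)"
proof
  fix c c' a assume c: "c \<in> chains G k" and c': "c' \<in> chains G k"
  show "bd G k (\<lambda>y. c y + c' y) = (\<lambda>x. bd G k c x + bd G k c' x)"
    using chains_finite_support[OF c] chains_finite_support[OF c']
    by (simp add: fun_eq_iff bd_eq_lincomb lincomb_add)
  show "bd G k (\<lambda>y. a * c y) = (\<lambda>x. a * bd G k c x)"
    using chains_finite_support[OF c] by (simp add: fun_eq_iff bd_eq_lincomb lincomb_scale)
  show "finite {x. bd G k c x \<noteq> 0}"
    by (rule finite_support_bd[OF chains_finite_support[OF c]])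
qed (simp_all add: chains_zero chains_add chains_scale)

lemma bd_basis_in_image: "\<sigma> \<in> tuples G k \<Longrightarrow> bd_basis G k \<sigma> \<in> bd G k ` chains G k"
  using image_eqI[where f = "bd G k", OF bd_ind[symmetric] chains_ind] .

lemma bd_bd_basis_eq_faces:
  "bd G k (bd_basis G (k + 1) gs) = (\<lambda>y. \<Sum>i\<in>{0..k + 1}. (-1) ^ i * bd_basis G k (face G (k + 1) i gs) y)"
proof -
  have "bd G k (bd_basis G (k + 1) gs) = bd G k (\<lambda>y. \<Sum>i\<in>{0..k + 1}. (-1) ^ i * ind (face G (k + 1) i gs) y)"
    by (subst bd_basis_eq_faces) simp_all
  also have "\<dots> = (\<lambda>y. \<Sum>i\<in>{0..k + 1}. (-1) ^ i * bd G k (ind (face G (k + 1) i gs)) y)"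
    by (rule bd_sum) (simp_all add: finite_support_ind)
  finally show ?thesis by (simp only: bd_ind)
qed

lemma bd_bd_basis:
  assumes "group G" and "gs \<in> tuples G (k + 1)"
  shows "bd G k (bd_basis G (k + 1) gs) = (\<lambda>_. 0)"
proof (cases "k = 0")
  case True
  then show ?thesis by (simp add: bd_def bd_basis_def)
next
  case False
  show ?thesis
  proof
    fix y
    have "bd G k (bd_basis G (k + 1) gs) y =
        (\<Sum>i\<in>{0..k + 1}. (-1) ^ i * (\<Sum>j\<in>{0..k}. (-1) ^ j * ind (face G k j (face G (k + 1) i gs)) y))"
      unfolding bd_bd_basis_eq_faces using False by (simp add: bd_basis_eq_faces)
    also have "\<dots> = (\<Sum>i\<in>{0..k + 1}. \<Sum>j\<in>{0..k + 1 - 1}. (-1) ^ (i + j) * ind (face G k j (face G (k + 1) i gs)) y)"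
      by (simp add: sum_distrib_left power_add mult.assoc)
    also have "\<dots> = 0"
      by (rule alternating_double_sum_cancel) (use face_face[OF assms] False in auto)
    finally show "bd G k (bd_basis G (k + 1) gs) y = 0" .
  qed
qed

section \<open>Bounded primitives\<close>

lemma lincomb_bd_basis:
  assumes "x \<in> tuples G (k + 1)"
  shows "lincomb (bd_basis G (k + 1) x) g = cobound G k g x"
proof -
  have "lincomb (\<lambda>y. \<Sum>i\<in>{0..k + 1}. (-1) ^ i * ind (face G (k + 1) i x) y) g =
      (\<Sum>i\<in>{0..k + 1}. of_int ((-1) ^ i) * lincomb (ind (face G (k + 1) i x)) g)"
    by (rule lincomb_sum) (simp_all add: finite_support_ind)
  then show ?thesis
    unfolding bd_basis_eq_faces[of "k + 1", OF le_add2] cobound_eq_faces[OF assms]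
    by (simp only: lincomb_ind of_int_power of_int_minus of_int_1)
qed

lemma lincomb_bd:
  assumes "c \<in> chains G (k + 1)"
  shows "lincomb (bd G (k + 1) c) g = lincomb c (cobound G k g)"
proof -
  have "lincomb (bd G (k + 1) c) g =
      (\<Sum>x\<in>{x. c x \<noteq> 0}. of_int (c x) * lincomb (bd_basis G (k + 1) x) g)"
    unfolding bd_def
    by (rule lincomb_sum) (simp_all add: chains_finite_support[OF assms] finite_support_bd_basis)
  also have "\<dots> = (\<Sum>x\<in>{x. c x \<noteq> 0}. of_int (c x) * cobound G k g x)"
  proof (intro sum.cong refl)
    fix x assume "x \<in> {x. c x \<noteq> 0}"
    then have "x \<in> tuples G (k + 1)" using assms unfolding chains_def by blast
    then show "of_int (c x) * lincomb (bd_basis G (k + 1) x) g = of_int (c x) * cobound G k g x"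
      by (simp only: lincomb_bd_basis)
  qed
  finally show ?thesis by (simp only: lincomb_def)
qed

lemma homology_fg_lincomb_bounded:
  assumes na: "nonarch_abs v" and fg: "homology_fg G k" and C: "\<And>x. v (cobound G k g x) \<le> C"
  obtains M where "\<And>z. z \<in> hcycles G k \<Longrightarrow> v (lincomb z g) \<le> M"
proof -
  obtain S where S: "finite S" "S \<subseteq> hcycles G k"
    and gen: "\<And>z. z \<in> hcycles G k \<Longrightarrow> \<exists>a. (\<lambda>y. z y - (\<Sum>s\<in>S. a s * s y)) \<in> hboundaries G k"
    using fg unfolding homology_fg_def by blast
  have S_fin: "finite {x. s x \<noteq> 0}" if "s \<in> S" for s
    using S that unfolding hcycles_def chains_def by auto
  define M where "M = max C 0 + (\<Sum>s\<in>S. v (lincomb s g))"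
  have M_ge: "max C 0 \<le> M"
    unfolding M_def by (simp add: sum_nonneg nonarch_abs_nonneg[OF na])
  have M_ge_S: "v (lincomb s g) \<le> M" if "s \<in> S" for s
  proof -
    have "v (lincomb s g) \<le> (\<Sum>s\<in>S. v (lincomb s g))"
      by (rule member_le_sum) (use that S nonarch_abs_nonneg[OF na] in auto)
    then show ?thesis unfolding M_def by simp
  qed
  have "v (lincomb z g) \<le> M" if z: "z \<in> hcycles G k" for z
  proof -
    obtain a c where c: "c \<in> chains G (k + 1)"
      and boundary: "(\<lambda>y. z y - (\<Sum>s\<in>S. a s * s y)) = bd G (k + 1) c"
      using gen[OF z] unfolding hboundaries_def by blast
    define u where "u = (\<lambda>y. \<Sum>s\<in>S. a s * s y)"
    have z_eq: "z = (\<lambda>y. u y + bd G (k + 1) c y)"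
      using boundary by (simp add: u_def fun_eq_iff algebra_simps)
    have u_fin: "finite {x. u x \<noteq> 0}"
      by (rule finite_subset[of _ "\<Union>s\<in>S. {x. s x \<noteq> 0}"])
         (use S(1) S_fin in \<open>auto simp: u_def elim!: sum.not_neutral_contains_not_neutral\<close>)
    have "lincomb u g = (\<Sum>s\<in>S. of_int (a s) * lincomb s g)"
      unfolding u_def by (rule lincomb_sum[OF S(1) S_fin])
    moreover have "v (\<Sum>s\<in>S. of_int (a s) * lincomb s g) \<le> M"
      by (rule nonarch_abs_sum_le[OF na])
         (use order_trans[OF nonarch_abs_of_int_mult_le[OF na] M_ge_S] M_ge in auto)
    ultimately have "v (lincomb u g) \<le> M" by simp
    moreover have "v (lincomb (bd G (k + 1) c) g) \<le> M"
      unfolding lincomb_bd[OF c]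
      by (rule order_trans[OF nonarch_abs_lincomb_le[OF na] M_ge]) (use C in \<open>auto simp: le_max_iff_disj\<close>)
    moreover have "lincomb z g = lincomb u g + lincomb (bd G (k + 1) c) g"
      unfolding z_eq by (rule lincomb_add[OF u_fin finite_support_bd[OF chains_finite_support[OF c]]])
    ultimately show ?thesis
      using nonarch_abs_add[OF na, of "lincomb u g" "lincomb (bd G (k + 1) c) g"] by simp
  qed
  then show ?thesis by (rule that)
qed

lemma cycle_of_linear_section:
  assumes s: "linear_section_on (bd G k ` chains G k) (chains G k) (bd G k) s"
    and \<sigma>: "\<sigma> \<in> tuples G k"
  shows "(\<lambda>y. ind \<sigma> y - s (bd_basis G k \<sigma>) y) \<in> hcycles G k"
proof -
  have b: "bd_basis G k \<sigma> \<in> bd G k ` chains G k" by (rule bd_basis_in_image[OF \<sigma>])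
  note sb = linear_section_on_mem[OF s b] linear_section_on_inverse[OF s b]
  have "bd G k (\<lambda>y. ind \<sigma> y - s (bd_basis G k \<sigma>) y) = (\<lambda>_. 0)"
    using sb by (simp add: bd_diff finite_support_ind chains_finite_support bd_ind)
  then show ?thesis
    using chains_diff[OF chains_ind[OF \<sigma>] sb(1)] unfolding hcycles_def by blast
qed

lemma linear_section_alternating_faces:
  assumes G: "group G" and s: "linear_section_on (bd G k ` chains G k) (chains G k) (bd G k) s"
    and \<tau>: "\<tau> \<in> tuples G (k + 1)"
  shows "(\<lambda>y. \<Sum>i\<in>{0..k + 1}. (-1) ^ i * s (bd_basis G k (face G (k + 1) i \<tau>)) y) = (\<lambda>_. 0)"
proof -
  interpret int_linear_map "chains G k" "bd G k" by (rule int_linear_map_bd)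
  have faces: "bd_basis G k (face G (k + 1) i \<tau>) \<in> bd G k ` chains G k" if "i \<in> {0..k + 1}" for i
    using face_in_tuples[OF G \<tau>, of i] that by (intro bd_basis_in_image) simp
  have "(\<lambda>y. \<Sum>i\<in>{0..k + 1}. (-1) ^ i * s (bd_basis G k (face G (k + 1) i \<tau>)) y) =
      s (bd G k (bd_basis G (k + 1) \<tau>))"
    unfolding bd_bd_basis_eq_faces by (rule linear_section_on_sum[OF s _ faces, symmetric]) simp
  also have "\<dots> = (\<lambda>_. 0)"
    using linear_section_on_scale[OF s image_zero, of 0] unfolding bd_bd_basis[OF G \<tau>] by simp
  finally show ?thesis .
qed

lemma bounded_primitive:
  assumes na: "nonarch_abs v" and G: "group G" and fg: "homology_fg G k"
    and C: "\<And>x. v (cobound G k g x) \<le> C"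
  obtains h where "h \<in> bcochains G v k" and "cobound G k h = cobound G k g"
proof -
  obtain s where s: "linear_section_on (bd G k ` chains G k) (chains G k) (bd G k) s"
    using int_linear_map.exists_linear_section[OF int_linear_map_bd] by blast
  obtain M where M: "\<And>z. z \<in> hcycles G k \<Longrightarrow> v (lincomb z g) \<le> M"
    using homology_fg_lincomb_bounded[OF na fg C] by blast
  define h where
    "h \<sigma> = (if \<sigma> \<in> tuples G k then lincomb (\<lambda>y. ind \<sigma> y - s (bd_basis G k \<sigma>) y) g else 0)" for \<sigma>
  have bound: "v (h \<sigma>) \<le> max M 0" for \<sigma>
    using M[OF cycle_of_linear_section[OF s]] nonarch_abs_zero[OF na] unfolding h_def
    by (cases "\<sigma> \<in> tuples G k") (auto simp: le_max_iff_disj)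
  moreover have "h \<in> cochains G k" by (simp add: cochains_def h_def)
  ultimately have "h \<in> bcochains G v k" unfolding bcochains_def by blast
  moreover have "cobound G k h = cobound G k g"
  proof
    fix \<tau>
    show "cobound G k h \<tau> = cobound G k g \<tau>"
    proof (cases "\<tau> \<in> tuples G (k + 1)")
      case True
      let ?t = "\<lambda>i. s (bd_basis G k (face G (k + 1) i \<tau>))"
      have t: "?t i \<in> chains G k" if "i \<in> {0..k + 1}" for i
        using face_in_tuples[OF G True, of i] that
        by (intro linear_section_on_mem[OF s] bd_basis_in_image) simp
      have "h (face G (k + 1) i \<tau>) = g (face G (k + 1) i \<tau>) - lincomb (?t i) g" if "i \<in> {0..k + 1}" for i
        using face_in_tuples[OF G True, of i] that chains_finite_support[OF t[OF that]]
        by (simp add: h_def lincomb_diff finite_support_ind)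
      then have "cobound G k h \<tau> = cobound G k g \<tau> - (\<Sum>i\<in>{0..k + 1}. (-1) ^ i * lincomb (?t i) g)"
        by (simp add: cobound_eq_faces[OF True] right_diff_distrib sum_subtractf)
      also have "(\<Sum>i\<in>{0..k + 1}. (-1) ^ i * lincomb (?t i) g) = lincomb (\<lambda>y. \<Sum>i\<in>{0..k + 1}. (-1) ^ i * ?t i y) g"
      proof -
        have "lincomb (\<lambda>y. \<Sum>i\<in>{0..k + 1}. (-1) ^ i * ?t i y) g =
            (\<Sum>i\<in>{0..k + 1}. of_int ((-1) ^ i) * lincomb (?t i) g)"
          by (rule lincomb_sum) (use t chains_finite_support in auto)
        then show ?thesis by (simp only: of_int_power of_int_minus of_int_1)
      qed
      finally show ?thesis
        unfolding linear_section_alternating_faces[OF G s True] by simp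
    qed (simp add: cobound_def)
  qed
  ultimately show ?thesis by (rule that)
qed

section \<open>Injectivity of the comparison map\<close>

lemma cobound_add: "cobound G k (\<lambda>x. a x + b x) = (\<lambda>x. cobound G k a x + cobound G k b x)"
  by (simp add: fun_eq_iff cobound_def sum.distrib distrib_left algebra_simps)

lemma cobound_diff: "cobound G k (\<lambda>x. a x - b x) = (\<lambda>x. cobound G k a x - cobound G k b x)"
  by (simp add: fun_eq_iff cobound_def sum_subtractf right_diff_distrib algebra_simps)

lemma cobound_zero: "cobound G k (\<lambda>_. 0) = (\<lambda>_. 0)"
  by (simp add: fun_eq_iff cobound_def)

lemma bcochains_zero: "(\<lambda>_. 0) \<in> bcochains G v k"
  unfolding bcochains_def cochains_def by auto

lemma bcochains_add_diff:
  assumes na: "nonarch_abs v" and a: "a \<in> bcochains G v k" and b: "b \<in> bcochains G v k"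
  shows "(\<lambda>x. a x + b x) \<in> bcochains G v k" and "(\<lambda>x. a x - b x) \<in> bcochains G v k"
proof -
  obtain Ca Cb where "\<And>x. v (a x) \<le> Ca" "\<And>x. v (b x) \<le> Cb"
    using a b unfolding bcochains_def by blast
  then have "v (a x + b x) \<le> max Ca Cb" "v (a x - b x) \<le> max Ca Cb" for x
    using nonarch_abs_add[OF na, of "a x" "b x"] nonarch_abs_diff[OF na, of "a x" "b x"]
    by (meson max.mono order_trans)+
  then show "(\<lambda>x. a x + b x) \<in> bcochains G v k" "(\<lambda>x. a x - b x) \<in> bcochains G v k"
    using a b unfolding bcochains_def cochains_def by auto
qed

lemma coboundaries_Suc: "coboundaries G (Suc k) = cobound G k ` cochains G k"
  by (simp add: coboundaries_def)

lemma bcoboundaries_Suc: "bcoboundaries G v (Suc k) = cobound G k ` bcochains G v k"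
  by (simp add: bcoboundaries_def)

lemma coboundaries_add:
  assumes "p \<in> coboundaries G (Suc k)" and "q \<in> coboundaries G (Suc k)"
  shows "(\<lambda>x. p x + q x) \<in> coboundaries G (Suc k)"
proof -
  obtain a b where ab: "a \<in> cochains G k" "b \<in> cochains G k"
    and "p = cobound G k a" "q = cobound G k b"
    using assms unfolding coboundaries_Suc by blast
  then have "(\<lambda>x. p x + q x) = cobound G k (\<lambda>x. a x + b x)" by (simp add: cobound_add)
  moreover have "(\<lambda>x. a x + b x) \<in> cochains G k" using ab by (simp add: cochains_def)
  ultimately show ?thesis unfolding coboundaries_Suc by blast
qed

lemma bcoboundaries_add_diff:
  assumes na: "nonarch_abs v"
    and "p \<in> bcoboundaries G v (Suc k)" and "q \<in> bcoboundaries G v (Suc k)"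
  shows "(\<lambda>x. p x + q x) \<in> bcoboundaries G v (Suc k)"
    and "(\<lambda>x. p x - q x) \<in> bcoboundaries G v (Suc k)"
proof -
  obtain a b where ab: "a \<in> bcochains G v k" "b \<in> bcochains G v k"
    and "p = cobound G k a" "q = cobound G k b"
    using assms(2,3) unfolding bcoboundaries_Suc by blast
  then have "(\<lambda>x. p x + q x) = cobound G k (\<lambda>x. a x + b x)"
    and "(\<lambda>x. p x - q x) = cobound G k (\<lambda>x. a x - b x)"
    by (simp_all add: cobound_add cobound_diff)
  then show "(\<lambda>x. p x + q x) \<in> bcoboundaries G v (Suc k)" "(\<lambda>x. p x - q x) \<in> bcoboundaries G v (Suc k)"
    unfolding bcoboundaries_Suc using bcochains_add_diff[OF na ab] by auto
qed

lemma bcoboundaries_subset: "bcoboundaries G v n \<subseteq> coboundaries G n"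
  unfolding bcoboundaries_def coboundaries_def bcochains_def by auto

lemma bounded_coboundary_in_bcoboundaries:
  assumes na: "nonarch_abs v" and G: "group G" and fg: "homology_fg G k"
    and f: "f \<in> bcochains G v (Suc k)" "f \<in> coboundaries G (Suc k)"
  shows "f \<in> bcoboundaries G v (Suc k)"
proof -
  obtain g where f_eq: "f = cobound G k g" using f(2) unfolding coboundaries_Suc by blast
  obtain C where "\<And>x. v (cobound G k g x) \<le> C" using f(1) unfolding f_eq bcochains_def by blast
  then obtain h where "h \<in> bcochains G v k" "cobound G k h = cobound G k g"
    by (rule bounded_primitive[OF na G fg])
  then show ?thesis unfolding f_eq bcoboundaries_Suc by (metis image_eqI)
qed

lemma bcoh_class_eq:
  assumes na: "nonarch_abs v" and diff: "(\<lambda>x. f x - f' x) \<in> bcoboundaries G v (Suc k)"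
  shows "bcoh_class G v (Suc k) f = bcoh_class G v (Suc k) f'"
proof -
  have "(\<lambda>x. h x - f x) \<in> bcoboundaries G v (Suc k) \<longleftrightarrow> (\<lambda>x. h x - f' x) \<in> bcoboundaries G v (Suc k)"
    for h
    using bcoboundaries_add_diff(1)[OF na _ diff, of "\<lambda>x. h x - f x"]
      bcoboundaries_add_diff(2)[OF na _ diff, of "\<lambda>x. h x - f' x"] by auto
  then show ?thesis unfolding bcoh_class_def by blast
qed

lemma comparison_map_eq_coboundary:
  assumes f1: "f1 \<in> bcocycles G v (Suc k)"
    and eq: "comparison_map G (Suc k) (bcoh_class G v (Suc k) f1) =
      comparison_map G (Suc k) (bcoh_class G v (Suc k) f2)"
  shows "(\<lambda>x. f1 x - f2 x) \<in> coboundaries G (Suc k)"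
proof -
  have zero: "(\<lambda>_. 0) \<in> bcoboundaries G v (Suc k)"
    using imageI[OF bcochains_zero, of "cobound G k" G v k] by (simp add: bcoboundaries_Suc cobound_zero)
  have "f1 \<in> bcoh_class G v (Suc k) f1" "f1 \<in> coh_class G (Suc k) f1"
    using f1 zero bcoboundaries_subset
    by (auto simp: bcoh_class_def coh_class_def bcocycles_def cocycles_def bcochains_def)
  then have "f1 \<in> comparison_map G (Suc k) (bcoh_class G v (Suc k) f2)"
    using eq unfolding comparison_map_def by blast
  then obtain f where "(\<lambda>x. f1 x - f x) \<in> coboundaries G (Suc k)"
    and "(\<lambda>x. f x - f2 x) \<in> coboundaries G (Suc k)"
    using bcoboundaries_subset unfolding comparison_map_def coh_class_def bcoh_class_def by blast
  from coboundaries_add[OF this] show ?thesis by simp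
qed

theorem corollary9p44:
  fixes G :: "('a, 'b) monoid_scheme" and v :: "'k::field \<Rightarrow> real" and n :: nat
  assumes "nonarch_abs v"
    and "group G"
    and "n \<ge> 1"
    and "homology_fg G (n - 1)"
  shows "inj_on (comparison_map G n) (bounded_cohomology G v n :: ('a list \<Rightarrow> 'k) set set)"
proof -
  obtain k where n: "n = Suc k" using assms(3) by (cases n) auto
  have fg: "homology_fg G k" using assms(4) by (simp add: n)
  show ?thesis
    unfolding n
  proof (rule inj_onI)
    fix X Y :: "('a list \<Rightarrow> 'k) set"
    assume "X \<in> bounded_cohomology G v (Suc k)" "Y \<in> bounded_cohomology G v (Suc k)"
      and eq: "comparison_map G (Suc k) X = comparison_map G (Suc k) Y"
    then obtain f1 f2 where f: "f1 \<in> bcocycles G v (Suc k)" "f2 \<in> bcocycles G v (Suc k)"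
      and XY: "X = bcoh_class G v (Suc k) f1" "Y = bcoh_class G v (Suc k) f2"
      unfolding bounded_cohomology_def by blast
    have "(\<lambda>x. f1 x - f2 x) \<in> coboundaries G (Suc k)"
      using comparison_map_eq_coboundary[OF f(1)] eq unfolding XY .
    moreover have "(\<lambda>x. f1 x - f2 x) \<in> bcochains G v (Suc k)"
      using bcochains_add_diff(2)[OF assms(1)] f unfolding bcocycles_def by blast
    ultimately have "(\<lambda>x. f1 x - f2 x) \<in> bcoboundaries G v (Suc k)"
      by (intro bounded_coboundary_in_bcoboundaries[OF assms(1,2) fg])
    then show "X = Y" unfolding XY by (rule bcoh_class_eq[OF assms(1)])
  qed
qed

end
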